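(* Let $d\ge2$, $s_n=2(\log n)^2$, $s_{n,+}=(3s_n)^d$ and $W_{s_{n,+}}=[-s_{n,+}^{1/d}/2,s_{n,+}^{1/d}/2]^d$. If $\varepsilon>0$ is sufficiently small, then $$\big|\{(x_0,x_1,x_2)\in W_{s_{n,+}}^3:\ d_{01}<d_{012}\le d_{01}+n^{-2+\varepsilon}\}\big|\in O(n^{-1/4})\quad(n\to\infty),$$ where $|\cdot|$ denotes Lebesgue measure on $(\mathbb R^d)^3$.
   Context: $d_{01}=|x_0-x_1|/2$, and $d_{012}=\inf\{r>0: B_r(x_0)\cap B_r(x_1)\cap B_r(x_2)\ne\varnothing\}$ is the Čech filtration time of the triangle $\{x_0,x_1,x_2\}$. *)

theory Defs
  imports "HOL-Analysis.Analysis" "HOL-Library.Landau_Symbols"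
begin

definition d01 :: "real^'n \<Rightarrow> real^'n \<Rightarrow> real" where
  "d01 x0 x1 = dist x0 x1 / 2"

definition d012 :: "real^'n \<Rightarrow> real^'n \<Rightarrow> real^'n \<Rightarrow> real" where
  "d012 x0 x1 x2 = Inf {r. r > 0 \<and> ball x0 r \<inter> ball x1 r \<inter> ball x2 r \<noteq> {}}"

definition s_n :: "nat \<Rightarrow> real" where
  "s_n n = 2 * (ln (real n))^2"

definition s_plus :: "nat \<Rightarrow> nat \<Rightarrow> real" where
  "s_plus d n = (3 * s_n n) ^ d"

definition W :: "real \<Rightarrow> (real^'n) set" where
  "W s = {x. \<forall>i. \<bar>x $ i\<bar> \<le> s powr (1 / real CARD('n)) / 2}"

end

(* If d01 < d012, then x2 lies outside the closed ball with diameter [x0, x1]: otherwise the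
   midpoint m of x0 and x1 would be a common point of the three balls of radius d01.
   If d012 <= d01 + delta, some point p lies within d01 + 2 delta of all three vertices, and
   Apollonius' identity |p - m|^2 = (|p - x0|^2 + |p - x1|^2) / 2 - d01^2 puts p within
   O(sqrt (D delta)) of m, where D bounds the diameter of the box.  So x2 lies in a spherical
   shell about m of inner radius d01 and width O(sqrt (D delta)).  By Tonelli the measure is at
   most |W|^2 times the volume of such a shell, i.e. polylog(n) * n^(-1 + eps/2), which is
   O(n^(-1/4)) for eps <= 1/2. *)

theory Submission
  imports Defs
begin

lemma dist_midpoint_sq:
  fixes a b p :: "'a::real_inner"
  shows "(dist p (midpoint a b))\<^sup>2 = ((dist p a)\<^sup>2 + (dist p b)\<^sup>2) / 2 - (dist a b / 2)\<^sup>2"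
  by (simp add: dist_norm midpoint_def power2_norm_eq_inner inner_diff_left inner_diff_right
      inner_add_left inner_add_right inner_commute field_simps)

lemma d012_le:
  assumes "dist x0 p \<le> r" "dist x1 p \<le> r" "dist x2 p \<le> r"
  shows "d012 x0 x1 x2 \<le> r"
  unfolding d012_def
proof (rule dense_ge)
  fix t assume "r < t"
  with assms have "p \<in> ball x0 t \<inter> ball x1 t \<inter> ball x2 t"
    by auto
  moreover have "0 < t"
    using zero_le_dist[of x0 p] assms(1) \<open>r < t\<close> by linarith
  ultimately have "t \<in> {r. r > 0 \<and> ball x0 r \<inter> ball x1 r \<inter> ball x2 r \<noteq> {}}"
    by blast
  then show "Inf {r. r > 0 \<and> ball x0 r \<inter> ball x1 r \<inter> ball x2 r \<noteq> {}} \<le> t"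
    by (intro cInf_lower) (auto intro: bdd_belowI[where m = 0])
qed

lemma d012_lessE:
  assumes "d012 x0 x1 x2 < t"
  obtains p where "dist x0 p < t" "dist x1 p < t" "dist x2 p < t"
proof -
  let ?R = "{r. r > 0 \<and> ball x0 r \<inter> ball x1 r \<inter> ball x2 r \<noteq> {}}"
  define R where "R = 1 + dist x0 x1 + dist x0 x2"
  have "0 < R" "x0 \<in> ball x0 R \<inter> ball x1 R \<inter> ball x2 R"
    by (auto simp: R_def dist_commute add_pos_nonneg)
  then have "R \<in> ?R"
    by blast
  then obtain r where "r \<in> ?R" "r < t"
    using cInf_lessD[of ?R t] assms unfolding d012_def by blast
  then obtain p where "p \<in> ball x0 r" "p \<in> ball x1 r" "p \<in> ball x2 r"
    by blast
  with \<open>r < t\<close> show thesis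
    using that[of p] by simp
qed

lemma d01_less_dist_midpoint:
  assumes "d01 x0 x1 < d012 x0 x1 x2"
  shows "d01 x0 x1 < dist x2 (midpoint x0 x1)"
proof -
  have "d012 x0 x1 x2 \<le> max (d01 x0 x1) (dist x2 (midpoint x0 x1))"
    by (rule d012_le[where p = "midpoint x0 x1"]) (auto simp: d01_def dist_midpoint dist_commute)
  with assms show ?thesis by linarith
qed

lemma dist_midpoint_le_if_d012_le:
  assumes "d012 x0 x1 x2 \<le> d01 x0 x1 + \<delta>" "0 < \<delta>" "d01 x0 x1 \<le> D" "\<delta> \<le> D"
  shows "dist x2 (midpoint x0 x1) \<le> d01 x0 x1 + 5 * sqrt (D * \<delta>)"
proof -
  define r t where "r = d01 x0 x1" and "t = r + 2 * \<delta>"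
  obtain p where p: "dist x0 p < t" "dist x1 p < t" "dist x2 p < t"
    using d012_lessE[of x0 x1 x2 t] assms(1,2) unfolding r_def t_def by force
  have "(dist p x0)\<^sup>2 < t\<^sup>2" "(dist p x1)\<^sup>2 < t\<^sup>2"
    using p by (simp_all add: dist_commute power_strict_mono)
  then have "(dist p (midpoint x0 x1))\<^sup>2 < t\<^sup>2 - r\<^sup>2"
    by (simp add: dist_midpoint_sq r_def d01_def)
  also have "\<dots> = 4 * r * \<delta> + 4 * \<delta> * \<delta>"
    by (simp add: t_def power2_eq_square algebra_simps)
  also have "\<dots> \<le> 9 * (D * \<delta>)"
  proof -
    have "r * \<delta> \<le> D * \<delta>" "\<delta> * \<delta> \<le> D * \<delta>" "0 \<le> D * \<delta>"
      using assms(2-4) by (simp_all add: mult_right_mono r_def)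
    then show ?thesis by linarith
  qed
  finally have "dist p (midpoint x0 x1) < 3 * sqrt (D * \<delta>)"
    using real_less_rsqrt by (fastforce simp: real_sqrt_mult)
  moreover have "\<delta> \<le> sqrt (D * \<delta>)"
    using assms(2,4) real_sqrt_le_mono[of "\<delta> * \<delta>" "D * \<delta>"] by (simp add: mult_right_mono)
  ultimately show ?thesis
    using dist_triangle[of x2 "midpoint x0 x1" p] p(3) unfolding t_def r_def by linarith
qed

lemma power_add_diff_power_le:
  fixes r h :: real
  assumes "0 \<le> r" "0 \<le> h"
  shows "(r + h) ^ n - r ^ n \<le> n * h * (r + h) ^ (n - 1)"
proof (induction n)
  case 0
  then show ?case by simp
next
  case (Suc n)
  have "(r + h) ^ Suc n - r ^ Suc n = (r + h) * ((r + h) ^ n - r ^ n) + h * r ^ n"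
    by (simp add: algebra_simps)
  also have "\<dots> \<le> (r + h) * (n * h * (r + h) ^ (n - 1)) + h * (r + h) ^ n"
    using Suc assms by (intro add_mono mult_left_mono mult_mono power_mono) auto
  also have "\<dots> = Suc n * h * (r + h) ^ n"
    by (cases n) (simp_all add: algebra_simps)
  finally show ?case
    by simp
qed

lemma emeasure_spherical_shell_le:
  fixes m :: "'a::euclidean_space"
  assumes "0 \<le> r" "0 \<le> h"
  shows "emeasure lborel {x. r < dist x m \<and> dist x m \<le> r + h}
    \<le> ennreal (unit_ball_vol DIM('a) * DIM('a) * h * (r + h) ^ (DIM('a) - 1))"
proof -
  let ?\<kappa> = "unit_ball_vol DIM('a)"
  have "emeasure lborel {x. r < dist x m \<and> dist x m \<le> r + h}
      \<le> emeasure lborel (cball m (r + h) - cball m r)"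
    by (intro emeasure_mono) (auto simp: dist_commute)
  also have "\<dots> = ennreal (?\<kappa> * (r + h) ^ DIM('a)) - ennreal (?\<kappa> * r ^ DIM('a))"
    using assms by (subst emeasure_Diff) (auto simp: emeasure_cball)
  also have "\<dots> = ennreal (?\<kappa> * ((r + h) ^ DIM('a) - r ^ DIM('a)))"
    using assms by (subst ennreal_minus) (auto intro!: mult_left_mono power_mono simp: right_diff_distrib)
  also have "\<dots> \<le> ennreal (?\<kappa> * (DIM('a) * h * (r + h) ^ (DIM('a) - 1)))"
    using power_add_diff_power_le[OF assms] by (intro ennreal_leI mult_left_mono) auto
  finally show ?thesis
    by (simp add: mult.assoc)
qed

lemma emeasure_lborel_pair_le:
  fixes T :: "('a::euclidean_space \<times> 'b::euclidean_space) set"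
  assumes "T \<in> sets borel" "S \<in> sets borel" "\<And>x y. (x, y) \<in> T \<Longrightarrow> x \<in> S"
    and "\<And>x. x \<in> S \<Longrightarrow> emeasure lborel (Pair x -` T) \<le> b"
  shows "emeasure lborel T \<le> emeasure lborel S * b"
proof -
  have "T \<in> sets (lborel \<Otimes>\<^sub>M lborel)"
    using assms(1) unfolding lborel_prod by simp
  then have "emeasure lborel T = (\<integral>\<^sup>+x. emeasure lborel (Pair x -` T) \<partial>lborel)"
    using lborel.emeasure_pair_measure_alt by (fastforce simp: lborel_prod)
  also have "\<dots> \<le> (\<integral>\<^sup>+x. b * indicator S x \<partial>lborel)"
  proof (rule nn_integral_mono)
    fix x
    show "emeasure lborel (Pair x -` T) \<le> b * indicator S x"
    proof (cases "x \<in> S")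
      case False
      then have "Pair x -` T = {}"
        using assms(3) by blast
      then show ?thesis by simp
    qed (simp add: assms(4))
  qed
  also have "\<dots> = b * emeasure lborel S"
    using assms(2) by (simp add: nn_integral_cmult_indicator)
  finally show ?thesis
    by (simp add: mult.commute)
qed

(* S need not be Lebesgue measurable: if it is not, its measure is 0 by convention. *)
lemma measure_lebesgue_le_if_subset:
  fixes S T :: "'a::euclidean_space set"
  assumes "S \<subseteq> T" "T \<in> sets borel" "emeasure lborel T \<le> ennreal b" "0 \<le> b"
  shows "measure lebesgue S \<le> b"
proof (cases "S \<in> sets lebesgue")
  case True
  have "T \<in> fmeasurable lebesgue"
    using assms(2,3) by (intro fmeasurableI) (auto simp: order_le_less_trans)
  then have "measure lebesgue S \<le> measure lebesgue T"
    using True assms(1) by (intro measure_mono_fmeasurable)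
  also have "\<dots> \<le> b"
    using assms(2-4) by (simp add: measure_def enn2real_leI)
  finally show ?thesis .
next
  case False
  then show ?thesis
    using assms(4) by (simp add: measure_notin_sets)
qed

lemma W_eq_cbox:
  "W s = cbox (- (\<chi> i. s powr (1 / CARD('n)) / 2)) (\<chi> i. s powr (1 / CARD('n)) / 2 :: real^'n)"
  unfolding W_def set_eq_iff mem_box_cart mem_Collect_eq vector_uminus_component vec_lambda_beta
    abs_le_iff all_conj_distrib
  by (auto simp: minus_le_iff)

lemma closed_W: "closed (W s)"
  unfolding W_eq_cbox by (rule closed_cbox)

lemma emeasure_W:
  assumes "0 \<le> s"
  shows "emeasure lborel (W s :: (real^'n) set) = ennreal s"
proof -
  let ?a = "\<chi> i. s powr (1 / CARD('n)) / 2 :: real^'n"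
  have "emeasure lborel (W s :: (real^'n) set) = ennreal (measure lborel (cbox (- ?a) ?a))"
    unfolding W_eq_cbox using emeasure_lborel_cbox_finite
    by (intro emeasure_eq_ennreal_measure) (simp add: less_top)
  also have "measure lborel (cbox (- ?a) ?a) = (s powr (1 / CARD('n))) ^ CARD('n)"
    by (simp add: content_cbox_cart interval_ne_empty_cart)
  also have "\<dots> = s"
    using assms by (cases "s = 0") (simp_all add: powr_power)
  finally show ?thesis .
qed

lemma dist_le_if_mem_W:
  fixes x y :: "real^'n"
  assumes "x \<in> W s" "y \<in> W s"
  shows "dist x y \<le> CARD('n) * s powr (1 / CARD('n))"
proof -
  have "\<bar>(x - y) $ i\<bar> \<le> s powr (1 / CARD('n))" for i
  proof -
    have "\<bar>x $ i\<bar> \<le> s powr (1 / CARD('n)) / 2" "\<bar>y $ i\<bar> \<le> s powr (1 / CARD('n)) / 2"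
      using assms by (simp_all add: W_def)
    then show ?thesis
      unfolding vector_minus_component by arith
  qed
  then have "(\<Sum>i\<in>UNIV. \<bar>(x - y) $ i\<bar>) \<le> CARD('n) * s powr (1 / CARD('n))"
    using sum_bounded_above[of UNIV "\<lambda>i. \<bar>(x - y) $ i\<bar>"] by simp
  then show ?thesis
    using norm_le_l1_cart[of "x - y"] by (simp add: dist_norm)
qed

definition diametral_shell :: "'a::real_normed_vector set \<Rightarrow> real \<Rightarrow> ('a \<times> 'a \<times> 'a) set" where
  "diametral_shell S w = {(x0, x1, x2). x0 \<in> S \<and> x1 \<in> S \<and>
     dist x0 x1 / 2 < dist x2 (midpoint x0 x1) \<and> dist x2 (midpoint x0 x1) \<le> dist x0 x1 / 2 + w}"

lemma diametral_shell_borel: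
  fixes S :: "'a::euclidean_space set"
  assumes [measurable]: "S \<in> sets borel"
  shows "diametral_shell S w \<in> sets borel"
proof -
  have "Measurable.pred (borel \<Otimes>\<^sub>M borel \<Otimes>\<^sub>M borel) (\<lambda>z. z \<in> diametral_shell S w)"
    unfolding diametral_shell_def midpoint_def mem_Collect_eq case_prod_beta by measurable
  then show ?thesis
    by (simp add: borel_prod pred_def)
qed

lemma emeasure_diametral_shell_le:
  fixes S :: "'a::euclidean_space set"
  assumes "S \<in> sets borel" "0 \<le> w" "\<And>x y. x \<in> S \<Longrightarrow> y \<in> S \<Longrightarrow> dist x y \<le> D"
  shows "emeasure lborel (diametral_shell S w) \<le> emeasure lborel S *
    (emeasure lborel S * ennreal (unit_ball_vol DIM('a) * DIM('a) * w * (D / 2 + w) ^ (DIM('a) - 1)))"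
    (is "_ \<le> _ * (_ * ennreal ?b)")
proof (rule emeasure_lborel_pair_le[OF diametral_shell_borel[OF assms(1)] assms(1)])
  fix x0 assume "x0 \<in> S"
  have "diametral_shell S w \<in> sets (borel \<Otimes>\<^sub>M borel)"
    using diametral_shell_borel[OF assms(1)] by (simp only: borel_prod)
  then have "Pair x0 -` diametral_shell S w \<in> sets borel"
    by (rule sets_Pair1)
  moreover have "emeasure lborel (Pair x1 -` Pair x0 -` diametral_shell S w) \<le> ennreal ?b"
    if "x1 \<in> S" for x1
  proof -
    define r where "r = dist x0 x1 / 2"
    have "Pair x1 -` Pair x0 -` diametral_shell S w =
        {x2. r < dist x2 (midpoint x0 x1) \<and> dist x2 (midpoint x0 x1) \<le> r + w}"
      using \<open>x0 \<in> S\<close> that by (auto simp: diametral_shell_def r_def)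
    also have "emeasure lborel \<dots> \<le> ennreal (unit_ball_vol DIM('a) * DIM('a) * w * (r + w) ^ (DIM('a) - 1))"
      by (rule emeasure_spherical_shell_le) (simp_all add: r_def assms(2))
    also have "\<dots> \<le> ennreal ?b"
      using assms(2) assms(3)[OF \<open>x0 \<in> S\<close> that]
      by (intro ennreal_leI mult_left_mono power_mono) (auto simp: r_def)
    finally show ?thesis .
  qed
  ultimately show "emeasure lborel (Pair x0 -` diametral_shell S w) \<le> emeasure lborel S * ennreal ?b"
    by (intro emeasure_lborel_pair_le[OF _ assms(1)]) (auto simp: diametral_shell_def)
qed (auto simp: diametral_shell_def)

lemma cech_gap_subset_diametral_shell:
  fixes S :: "(real^'n) set"
  assumes "0 < \<delta>" "\<delta> \<le> D" "\<And>x y. x \<in> S \<Longrightarrow> y \<in> S \<Longrightarrow> dist x y \<le> D"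
  shows "{(x0, x1, x2). x0 \<in> S \<and> x1 \<in> S \<and> x2 \<in> S \<and>
      d01 x0 x1 < d012 x0 x1 x2 \<and> d012 x0 x1 x2 \<le> d01 x0 x1 + \<delta>}
    \<subseteq> diametral_shell S (5 * sqrt (D * \<delta>))"
proof clarify
  fix x0 x1 x2
  assume "x0 \<in> S" "x1 \<in> S" "x2 \<in> S"
    and gap: "d01 x0 x1 < d012 x0 x1 x2" "d012 x0 x1 x2 \<le> d01 x0 x1 + \<delta>"
  have "d01 x0 x1 \<le> D"
    using assms(3)[OF \<open>x0 \<in> S\<close> \<open>x1 \<in> S\<close>] assms(1,2) by (simp add: d01_def)
  then show "(x0, x1, x2) \<in> diametral_shell S (5 * sqrt (D * \<delta>))"
    using \<open>x0 \<in> S\<close> \<open>x1 \<in> S\<close> d01_less_dist_midpoint[OF gap(1)]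
      dist_midpoint_le_if_d012_le[OF gap(2) assms(1) _ assms(2)]
    by (simp add: diametral_shell_def d01_def)
qed

lemma measure_cech_gap_le:
  fixes s \<delta> :: real
  defines "D \<equiv> CARD('n) * s powr (1 / CARD('n))"
  defines "w \<equiv> 5 * sqrt (D * \<delta>)"
  assumes "0 \<le> s" "0 < \<delta>" "\<delta> \<le> D"
  shows "measure lebesgue
      {(x0 :: real^'n, x1, x2). x0 \<in> W s \<and> x1 \<in> W s \<and> x2 \<in> W s \<and>
         d01 x0 x1 < d012 x0 x1 x2 \<and> d012 x0 x1 x2 \<le> d01 x0 x1 + \<delta>}
    \<le> s\<^sup>2 * (unit_ball_vol CARD('n) * CARD('n) * w * (D / 2 + w) ^ (CARD('n) - 1))"
proof -
  let ?b = "unit_ball_vol CARD('n) * CARD('n) * w * (D / 2 + w) ^ (CARD('n) - 1)"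
  have diam: "dist x y \<le> D" if "x \<in> W s" "y \<in> W s" for x y :: "real^'n"
    using dist_le_if_mem_W[OF that] by (simp add: D_def)
  have W_borel: "(W s :: (real^'n) set) \<in> sets borel"
    by (simp add: closed_W borel_closed)
  have "0 \<le> w"
    using assms(3-5) by (simp add: w_def D_def)
  have "emeasure lborel (diametral_shell (W s :: (real^'n) set) w) \<le> ennreal (s\<^sup>2 * ?b)"
    using emeasure_diametral_shell_le[of "W s" w D, OF W_borel \<open>0 \<le> w\<close> diam] assms(3) \<open>0 \<le> w\<close>
    by (simp add: emeasure_W ennreal_mult'[symmetric] power2_eq_square mult.assoc)
  moreover have "0 \<le> s\<^sup>2 * ?b"
    using assms(3-5) \<open>0 \<le> w\<close> by (simp add: D_def)
  ultimately show ?thesis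
    using cech_gap_subset_diametral_shell[OF assms(4,5) diam] diametral_shell_borel[OF W_borel]
    unfolding w_def by (intro measure_lebesgue_le_if_subset) auto
qed

lemma ln_power_le_powr:
  fixes x b :: real
  assumes "1 \<le> x" "0 < b"
  shows "ln x ^ k \<le> (k / b) ^ k * x powr b"
proof (cases "k = 0")
  case True
  then show ?thesis
    using assms by (simp add: ge_one_powr_ge_zero)
next
  case False
  have "ln x \<le> k / b * x powr (b / k)"
    using ln_powr_bound[of x "b / k"] assms False by (simp add: field_simps)
  then have "ln x ^ k \<le> (k / b * x powr (b / k)) ^ k"
    using assms by (intro power_mono) auto
  also have "\<dots> = (k / b) ^ k * (x powr (b / k)) ^ k"
    by (rule power_mult_distrib)
  also have "(x powr (b / k)) ^ k = x powr b"
    using assms False by (simp add: powr_power)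
  finally show ?thesis .
qed

lemma one_le_ln:
  fixes x :: real
  assumes "3 \<le> x"
  shows "1 \<le> ln x"
  using ln3_gt_1 ln_le_cancel_iff[of 3 x] assms by linarith

lemma s_plus_powr:
  assumes "0 < d"
  shows "s_plus d n powr (1 / d) = 6 * ln n ^ 2"
proof (cases "ln n = 0")
  case False
  have "s_plus d n = (6 * ln n ^ 2) powr d"
    using False by (simp add: s_plus_def s_n_def powr_realpow)
  then show ?thesis
    using assms by (simp add: powr_powr)
qed (use assms in \<open>simp add: s_plus_def s_n_def\<close>)

lemma diametral_shell_bound_le_power:
  fixes a D \<delta> \<kappa> w :: real and d :: nat
  defines "w \<equiv> 5 * sqrt (D * \<delta>)"
  assumes "0 \<le> a" "a \<le> D" "1 \<le> D" "0 \<le> \<delta>" "\<delta> \<le> 1" "1 \<le> d" "0 \<le> \<kappa>"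
  shows "(a ^ d)\<^sup>2 * (\<kappa> * d * w * (D / 2 + w) ^ (d - 1)) \<le> 5 * \<kappa> * d * 6 ^ (d - 1) * D ^ (3 * d) * sqrt \<delta>"
proof -
  have "sqrt D \<le> D"
    using \<open>1 \<le> D\<close> real_sqrt_le_mono[of D "D * D"] by simp
  then have "w \<le> 5 * D * sqrt \<delta>"
    using assms(5) by (simp add: w_def real_sqrt_mult mult_right_mono)
  moreover have "sqrt \<delta> \<le> 1"
    using assms(6) by simp
  ultimately have "w \<le> 5 * D"
    using \<open>1 \<le> D\<close> mult_left_mono[of "sqrt \<delta>" 1 "5 * D"] by linarith
  have "0 \<le> w"
    using assms(4,5) by (simp add: w_def)
  have "D * D ^ (d - 1) = D ^ d"
    using power_minus_mult[of d D] assms(7) by (simp add: mult.commute)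
  then have "(D ^ d)\<^sup>2 * (D * D ^ (d - 1)) = D ^ (3 * d)"
    by (simp add: power2_eq_square power_add[symmetric] numeral_3_eq_3 add.assoc)
  have "(a ^ d)\<^sup>2 * (\<kappa> * d * w * (D / 2 + w) ^ (d - 1))
      \<le> (D ^ d)\<^sup>2 * (\<kappa> * d * (5 * D * sqrt \<delta>) * (6 * D) ^ (d - 1))"
    using \<open>w \<le> 5 * D * sqrt \<delta>\<close> \<open>w \<le> 5 * D\<close> \<open>0 \<le> w\<close> assms(2-4,8)
    by (intro mult_mono power_mono) auto
  also have "\<dots> = 5 * \<kappa> * d * 6 ^ (d - 1) * ((D ^ d)\<^sup>2 * (D * D ^ (d - 1))) * sqrt \<delta>"
    by (simp add: power_mult_distrib mult_ac)
  also have "\<dots> = 5 * \<kappa> * d * 6 ^ (d - 1) * D ^ (3 * d) * sqrt \<delta>"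
    by (simp only: \<open>(D ^ d)\<^sup>2 * (D * D ^ (d - 1)) = D ^ (3 * d)\<close>)
  finally show ?thesis .
qed

(* a is the side length of W (s_plus d n) and D = d * a bounds its diameter. *)
lemma cech_gap_bound_le:
  fixes x \<epsilon> \<kappa> a :: real and d :: nat
  defines "a \<equiv> 6 * ln x ^ 2"
  defines "D \<equiv> d * a"
  defines "w \<equiv> 5 * sqrt (D * x powr (-2 + \<epsilon>))"
  assumes "3 \<le> x" "\<epsilon> \<le> 1/2" "1 \<le> d" "0 \<le> \<kappa>"
  shows "(a ^ d)\<^sup>2 * (\<kappa> * d * w * (D / 2 + w) ^ (d - 1))
    \<le> 5 * \<kappa> * d * 6 ^ (d - 1) * (6 * real d) ^ (3 * d) * (12 * real d) ^ (6 * d) * x powr (-1/4)"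
proof -
  have "1 \<le> ln x"
    using one_le_ln assms(4) .
  then have "6 \<le> a"
    using one_le_power[of "ln x" 2] by (simp add: a_def)
  moreover have "1 \<le> real d"
    using assms(6) by simp
  ultimately have "a \<le> D"
    using mult_right_mono[of 1 "real d" a] by (simp add: D_def)
  have "x powr (-2 + \<epsilon>) \<le> x powr (-3/2)"
    using assms(4,5) by (intro powr_mono) auto
  then have "sqrt (x powr (-2 + \<epsilon>)) \<le> x powr (-3/4)"
    using assms(4) real_sqrt_le_mono by (fastforce simp: powr_half_sqrt_powr[symmetric] powr_powr)
  have "x powr (-2 + \<epsilon>) \<le> 1"
    using powr_mono[of "-2 + \<epsilon>" 0 x] assms(4,5) by simp
  then have "(a ^ d)\<^sup>2 * (\<kappa> * d * w * (D / 2 + w) ^ (d - 1))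
      \<le> 5 * \<kappa> * d * 6 ^ (d - 1) * D ^ (3 * d) * sqrt (x powr (-2 + \<epsilon>))"
    using \<open>a \<le> D\<close> \<open>6 \<le> a\<close> assms(6,7) unfolding w_def
    by (intro diametral_shell_bound_le_power) auto
  also have "\<dots> \<le> 5 * \<kappa> * d * 6 ^ (d - 1) * ((6 * real d) ^ (3 * d) * (12 * real d) ^ (6 * d) * x powr (1/2)) * x powr (-3/4)"
  proof -
    have "D ^ (3 * d) = (6 * real d) ^ (3 * d) * ln x ^ (6 * d)"
      by (simp add: D_def a_def power_mult_distrib power_mult[symmetric] mult_ac)
    also have "\<dots> \<le> (6 * real d) ^ (3 * d) * ((12 * real d) ^ (6 * d) * x powr (1/2))"
      using ln_power_le_powr[of x "1/2" "6 * d"] assms(4) by (intro mult_left_mono) auto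
    finally show ?thesis
      using \<open>sqrt (x powr (-2 + \<epsilon>)) \<le> x powr (-3/4)\<close> \<open>a \<le> D\<close> \<open>6 \<le> a\<close> assms(7)
      by (intro mult_mono mult_left_mono) auto
  qed
  also have "\<dots> = 5 * \<kappa> * d * 6 ^ (d - 1) * (6 * real d) ^ (3 * d) * (12 * real d) ^ (6 * d) * x powr (-1/4)"
    by (simp add: powr_add[symmetric])
  finally show ?thesis .
qed

lemma measure_cech_gap_s_plus_le:
  fixes \<epsilon> :: real
  assumes "3 \<le> n" "\<epsilon> \<le> 1/2"
  shows "measure lebesgue
      {(x0 :: real^'n, x1, x2).
         x0 \<in> W (s_plus CARD('n) n) \<and> x1 \<in> W (s_plus CARD('n) n) \<and> x2 \<in> W (s_plus CARD('n) n) \<and>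
         d01 x0 x1 < d012 x0 x1 x2 \<and> d012 x0 x1 x2 \<le> d01 x0 x1 + real n powr (-2 + \<epsilon>)}
    \<le> 5 * unit_ball_vol CARD('n) * CARD('n) * 6 ^ (CARD('n) - 1) * (6 * real CARD('n)) ^ (3 * CARD('n))
        * (12 * real CARD('n)) ^ (6 * CARD('n)) * real n powr (-1/4)"
    (is "measure lebesgue ?S \<le> _")
proof -
  let ?d = "CARD('n)" and ?\<delta> = "real n powr (-2 + \<epsilon>)"
  define a where "a = 6 * ln (real n) ^ 2"
  define w where "w = 5 * sqrt (?d * a * ?\<delta>)"
  have powr_eq: "s_plus ?d n powr (1 / ?d) = a"
    by (simp add: s_plus_powr a_def)
  have "1 \<le> a"
    using one_le_power[OF one_le_ln, of n 2] assms(1) by (simp add: a_def)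
  then have "1 \<le> ?d * a"
    using mult_mono[of 1 "real ?d" 1 a] by simp
  moreover have "?\<delta> \<le> 1"
    using powr_mono[of "-2 + \<epsilon>" 0 n] assms by simp
  ultimately have "?\<delta> \<le> ?d * a"
    by linarith
  have "measure lebesgue ?S
      \<le> (s_plus ?d n)\<^sup>2 * (unit_ball_vol ?d * ?d * w * (?d * a / 2 + w) ^ (?d - 1))"
    by (rule measure_cech_gap_le[where 'n = 'n, of "s_plus ?d n" ?\<delta>, unfolded powr_eq, folded w_def])
      (use \<open>?\<delta> \<le> ?d * a\<close> assms(1) in \<open>simp_all add: s_plus_def s_n_def\<close>)
  also have "(s_plus ?d n)\<^sup>2 * (unit_ball_vol ?d * ?d * w * (?d * a / 2 + w) ^ (?d - 1))
      \<le> 5 * unit_ball_vol ?d * ?d * 6 ^ (?d - 1) * (6 * real ?d) ^ (3 * ?d) * (12 * real ?d) ^ (6 * ?d) * real n powr (-1/4)"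
    using cech_gap_bound_le[of n \<epsilon> ?d "unit_ball_vol ?d"] assms
    by (simp add: s_plus_def s_n_def a_def w_def)
  finally show ?thesis .
qed

theorem mainTheorem10:
  assumes "CARD('n) \<ge> 2"
  shows "\<exists>\<epsilon>0>0. \<forall>\<epsilon>. 0 < \<epsilon> \<and> \<epsilon> < \<epsilon>0 \<longrightarrow>
    (\<lambda>n::nat. measure lebesgue
       {(x0 :: real^'n, x1, x2).
          x0 \<in> W (s_plus CARD('n) n) \<and> x1 \<in> W (s_plus CARD('n) n) \<and> x2 \<in> W (s_plus CARD('n) n) \<and>
          d01 x0 x1 < d012 x0 x1 x2 \<and>
          d012 x0 x1 x2 \<le> d01 x0 x1 + real n powr (-2 + \<epsilon>)})
    \<in> O(\<lambda>n. real n powr (-1/4))"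
  apply (intro exI[of _ "1/2"] conjI allI impI bigoI eventually_mono[OF eventually_ge_at_top[of 3]])
   apply simp
  apply (unfold real_norm_def abs_of_nonneg[OF measure_nonneg] abs_of_nonneg[OF powr_ge_zero])
  apply (rule measure_cech_gap_s_plus_le)
   apply simp_all
  done

end
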